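(* For $n\ge 0$ let $P_n$ denote the path graph on $n$ vertices ($P_0$ is the empty graph, $P_1$ a single vertex, and for $n\ge 2$ a tree with exactly $n-2$ vertices of degree $2$). Then, as formal power series in $x$, $$\sum_{n\ge 0} \mathrm{sa}(P_n;t)\, x^n = \frac{-1+2tx+\sqrt{1+4x^2}}{2tx-2(t^2-1)x^2}.$$
   Context: All graphs are finite, simple and undirected. For a graph $G=(V,E)$ and $V'\subseteq V$, $G|_{V'}$ denotes the induced subgraph on $V'$. The signed a-number $\mathrm{sa}(G)$ is defined recursively: $\mathrm{sa}(G)=1$ if $G$ is the empty graph (no vertices); $\mathrm{sa}(G)=0$ if $G$ has a connected component with an odd number of vertices; otherwise $\mathrm{sa}(G)=-\sum_{V'\subsetneq V}\mathrm{sa}(G|_{V'})$. The signed a-polynomial of $G$ is $\mathrm{sa}(G;t)=\sum_{V'\subseteq V}\mathrm{sa}(G|_{V'})\,t^{|V\setminus V'|}$. *)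

theory Defs
  imports "HOL-Computational_Algebra.Computational_Algebra"
begin

text \<open>A simple graph is represented by a vertex set V together with a (symmetric,
irreflexive) edge relation E; the induced subgraph on V' is (V', E) restricted to V'.\<close>

definition reach :: "('a \<Rightarrow> 'a \<Rightarrow> bool) \<Rightarrow> 'a set \<Rightarrow> 'a \<Rightarrow> 'a \<Rightarrow> bool" where
  "reach E V = (\<lambda>x y. x \<in> V \<and> y \<in> V \<and> E x y)\<^sup>*\<^sup>*"

definition has_odd_component :: "('a \<Rightarrow> 'a \<Rightarrow> bool) \<Rightarrow> 'a set \<Rightarrow> bool" where
  "has_odd_component E V = (\<exists>v\<in>V. odd (card {w \<in> V. reach E V v w}))"

function sa :: "('a \<Rightarrow> 'a \<Rightarrow> bool) \<Rightarrow> 'a set \<Rightarrow> int" where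
  "sa E V = (if \<not> finite V then 0
             else if V = {} then 1
             else if has_odd_component E V then 0
             else - (\<Sum>U \<in> {U. U \<subset> V}. sa E U))"
  by auto
termination
  by (relation "measure (\<lambda>(E, V). card V)")
     (auto intro: psubset_card_mono)

definition sa_poly :: "('a \<Rightarrow> 'a \<Rightarrow> bool) \<Rightarrow> 'a set \<Rightarrow> int poly" where
  "sa_poly E V = (\<Sum>U \<in> Pow V. monom (sa E U) (card (V - U)))"

text \<open>Path graph P_n: vertex set {0..<n}, edges between i and i+1.\<close>
definition path_edge :: "nat \<Rightarrow> nat \<Rightarrow> bool" where
  "path_edge i j = (Suc i = j \<or> Suc j = i)"

text \<open>The formal variable t, as a constant power series over the field of fractions of Z[t].\<close>
definition T :: "int poly fract fps" where
  "T = fps_const (Fract [:0, 1:] 1)"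

text \<open>sqrt(1+4x^2): the power series square root with constant term 1.\<close>
definition sqrt_1_4x2 :: "int poly fract fps" where
  "sqrt_1_4x2 = fps_radical (\<lambda>_ _. 1) 2 (1 + 4 * fps_X ^ 2)"

end

theory Submission
  imports Defs
begin

text \<open>\<open>sa\<close> is multiplicative over disjoint unions with no edges in between and invariant under
  isomorphism. A proper induced subgraph of \<open>P_n\<close> splits at its least missing vertex \<open>j\<close> into \<open>P_j\<close>
  and a shifted induced subgraph of \<open>P_(n-j-1)\<close>; hence \<open>A = C + t x C A\<close>, where
  \<open>A = \<Sum> sa(P_n; t) x^n\<close> and \<open>C = \<Sum> sa(P_n) x^n\<close>. The series \<open>B = A|_(t=1)\<close> has coefficients
  \<open>\<Sum>_U sa(U)\<close>, which vanish for even \<open>n > 0\<close> by the defining recursion, and \<open>C\<close> is even since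
  odd paths have \<open>sa = 0\<close>. Comparing \<open>B(x)\<close> with \<open>B(-x)\<close> gives \<open>B = 1 + x C\<close> and \<open>C + x\<^sup>2 C\<^sup>2 = 1\<close>,
  i.e. \<open>\<surd>(1 + 4x\<^sup>2) = 1 + 2x\<^sup>2 C\<close>, and solving the linear equation for \<open>A\<close> gives the closed form.\<close>

section \<open>Signed a-numbers of arbitrary graphs\<close>

declare sa.simps [simp del]

lemma sa_empty [simp]: "sa E {} = 1"
  by (subst sa.simps) simp

lemma sa_eq_0_if_has_odd_component: "finite V \<Longrightarrow> has_odd_component E V \<Longrightarrow> sa E V = 0"
  by (subst sa.simps) (auto simp: has_odd_component_def)

lemma sa_eq_neg_sum_psubsets:
  "finite V \<Longrightarrow> V \<noteq> {} \<Longrightarrow> \<not> has_odd_component E V \<Longrightarrow>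
    sa E V = - (\<Sum>U \<in> {U. U \<subset> V}. sa E U)"
  by (subst sa.simps) simp

lemma Pow_eq_insert_psubsets: "Pow V = insert V {U. U \<subset> V}"
  by auto

lemma finite_psubsets: "finite V \<Longrightarrow> finite {U. U \<subset> V}"
  by (rule finite_subset[of _ "Pow V"]) auto

lemma sum_Pow_eq_plus_sum_psubsets:
  "finite V \<Longrightarrow> (\<Sum>U \<in> Pow V. g U) = g V + (\<Sum>U \<in> {U. U \<subset> V}. g U)"
  by (subst Pow_eq_insert_psubsets, subst sum.insert) (auto simp: finite_psubsets)

lemma sum_sa_Pow_eq_0:
  "finite V \<Longrightarrow> V \<noteq> {} \<Longrightarrow> \<not> has_odd_component E V \<Longrightarrow> (\<Sum>U \<in> Pow V. sa E U) = 0"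
  by (simp add: sum_Pow_eq_plus_sum_psubsets sa_eq_neg_sum_psubsets)

definition component :: "('a \<Rightarrow> 'a \<Rightarrow> bool) \<Rightarrow> 'a set \<Rightarrow> 'a \<Rightarrow> 'a set" where
  "component E V v = {w \<in> V. reach E V v w}"

lemma has_odd_component_iff: "has_odd_component E V \<longleftrightarrow> (\<exists>v\<in>V. odd (card (component E V v)))"
  by (simp add: has_odd_component_def component_def)

lemma reach_mono: "reach E A v w \<Longrightarrow> A \<subseteq> B \<Longrightarrow> reach E B v w"
  unfolding reach_def by (erule rtranclp_mono[THEN predicate2D, rotated]) auto

lemma reach_closed_subset:
  assumes "reach E U v w" "v \<in> A" "A \<subseteq> U"
    and closed: "\<And>x y. x \<in> A \<Longrightarrow> y \<in> U \<Longrightarrow> E x y \<Longrightarrow> y \<in> A"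
  shows "w \<in> A \<and> reach E A v w"
  using assms(1) unfolding reach_def
proof (induction rule: rtranclp_induct)
  case base
  then show ?case using assms(2) by simp
next
  case (step y z)
  then show ?case using closed by (metis (mono_tags, lifting) rtranclp.rtrancl_into_rtrancl)
qed

lemma reach_image:
  assumes "reach E V a b" "a \<in> V" "\<And>x y. x \<in> V \<Longrightarrow> y \<in> V \<Longrightarrow> E (f x) (f y) = E x y"
  shows "reach E (f ` V) (f a) (f b)"
  using assms(1) unfolding reach_def
proof (induction rule: rtranclp_induct)
  case base
  then show ?case by simp
next
  case (step y z)
  then show ?case using assms(3) by (metis (mono_tags, lifting) image_eqI rtranclp.rtrancl_into_rtrancl)
qed

lemma reach_sym: "symp E \<Longrightarrow> reach E V v w \<Longrightarrow> reach E V w v"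
  unfolding reach_def by (rule sympD[OF symp_rtranclp]) (auto simp: symp_def)

lemma component_image:
  assumes inj: "inj_on f V" and E: "\<And>x y. x \<in> V \<Longrightarrow> y \<in> V \<Longrightarrow> E (f x) (f y) = E x y"
    and v: "v \<in> V"
  shows "component E (f ` V) (f v) = f ` component E V v"
proof
  show "f ` component E V v \<subseteq> component E (f ` V) (f v)"
    using reach_image[of E V v _ f] v E by (auto simp: component_def)
next
  define g where "g = inv_into V f"
  have gf: "\<And>x. x \<in> V \<Longrightarrow> g (f x) = x"
    using inj unfolding g_def by simp
  then have gV: "g ` f ` V = V" by force
  have Eg: "\<And>x y. x \<in> f ` V \<Longrightarrow> y \<in> f ` V \<Longrightarrow> E (g x) (g y) = E x y"
    using E gf by auto
  show "component E (f ` V) (f v) \<subseteq> f ` component E V v"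
  proof
    fix w' assume w': "w' \<in> component E (f ` V) (f v)"
    then obtain w where w: "w \<in> V" "w' = f w" by (auto simp: component_def)
    have "reach E (g ` f ` V) (g (f v)) (g (f w))"
      using reach_image[of E "f ` V" "f v" "f w" g] w w' Eg v by (auto simp: component_def)
    then show "w' \<in> f ` component E V v"
      using gV gf v w by (auto simp: component_def)
  qed
qed

lemma has_odd_component_image:
  assumes "inj_on f V" "\<And>x y. x \<in> V \<Longrightarrow> y \<in> V \<Longrightarrow> E (f x) (f y) = E x y"
  shows "has_odd_component E (f ` V) = has_odd_component E V"
proof -
  have "card (component E (f ` V) (f v)) = card (component E V v)" if "v \<in> V" for v
  proof -
    have "inj_on f (component E V v)"
      by (rule inj_on_subset[OF assms(1)]) (auto simp: component_def)
    then show ?thesis using component_image[of f V E v] assms that by (simp add: card_image)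
  qed
  then show ?thesis unfolding has_odd_component_iff by auto
qed

lemma sum_psubsets_image:
  assumes "inj_on f V"
  shows "(\<Sum>U \<in> {U. U \<subset> f ` V}. g U) = (\<Sum>U \<in> {U. U \<subset> V}. g (f ` U))"
proof -
  have im: "image f ` {U. U \<subset> V} = {U. U \<subset> f ` V}"
  proof
    show "image f ` {U. U \<subset> V} \<subseteq> {U. U \<subset> f ` V}"
      using assms by (auto simp: inj_on_image_eq_iff[OF assms] inj_on_def)
    show "{U. U \<subset> f ` V} \<subseteq> image f ` {U. U \<subset> V}"
    proof
      fix U assume "U \<in> {U. U \<subset> f ` V}"
      then have "U \<subseteq> f ` V" "U \<noteq> f ` V" by auto
      then obtain W where "W \<subseteq> V" "U = f ` W" by (auto simp: subset_image_iff)
      with \<open>U \<noteq> f ` V\<close> show "U \<in> image f ` {U. U \<subset> V}" by blast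
    qed
  qed
  have "inj_on (image f) {U. U \<subset> V}"
    using inj_on_image_Pow[OF assms] by (rule inj_on_subset) auto
  then show ?thesis
    unfolding im[symmetric] by (simp add: sum.reindex)
qed

lemma sa_image:
  assumes "inj_on f V" "\<And>x y. x \<in> V \<Longrightarrow> y \<in> V \<Longrightarrow> E (f x) (f y) = E x y"
  shows "sa E (f ` V) = sa E V"
  using assms
proof (induction "card V" arbitrary: V rule: less_induct)
  case less
  consider "\<not> finite V" | "V = {}" | "finite V" "has_odd_component E V"
    | "finite V" "V \<noteq> {}" "\<not> has_odd_component E V"
    by blast
  then show ?case
  proof cases
    case 1
    then show ?thesis using less.prems(1) finite_image_iff by (subst (1 2) sa.simps) auto
  next
    case 2
    then show ?thesis by simp
  next
    case 3
    then show ?thesis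
      using has_odd_component_image[of f V E] less.prems by (simp add: sa_eq_0_if_has_odd_component)
  next
    case 4
    have IH: "sa E (f ` U) = sa E U" if "U \<subset> V" for U
    proof (rule less.hyps)
      show "card U < card V" using 4(1) that by (rule psubset_card_mono)
      show "inj_on f U" using less.prems(1) that by (auto intro: inj_on_subset)
      show "E (f x) (f y) = E x y" if "x \<in> U" "y \<in> U" for x y
        using less.prems(2) \<open>U \<subset> V\<close> that by blast
    qed
    have "(\<Sum>U \<in> {U. U \<subset> f ` V}. sa E U) = (\<Sum>U \<in> {U. U \<subset> V}. sa E (f ` U))"
      by (rule sum_psubsets_image[OF less.prems(1)])
    also have "\<dots> = (\<Sum>U \<in> {U. U \<subset> V}. sa E U)"
      using IH by (intro sum.cong) auto
    finally have "(\<Sum>U \<in> {U. U \<subset> f ` V}. sa E U) = (\<Sum>U \<in> {U. U \<subset> V}. sa E U)" .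
    then show ?thesis
      using 4 has_odd_component_image[of f V E] less.prems by (simp add: sa_eq_neg_sum_psubsets)
  qed
qed

lemma component_Un_disjoint:
  assumes "\<And>a b. a \<in> A \<Longrightarrow> b \<in> B \<Longrightarrow> \<not> E a b \<and> \<not> E b a" "A \<inter> B = {}" "v \<in> A"
  shows "component E (A \<union> B) v = component E A v"
proof
  show "component E (A \<union> B) v \<subseteq> component E A v"
  proof
    fix w assume "w \<in> component E (A \<union> B) v"
    then have "reach E (A \<union> B) v w" by (simp add: component_def)
    then have "w \<in> A \<and> reach E A v w"
    proof (rule reach_closed_subset)
      show "y \<in> A" if "x \<in> A" "y \<in> A \<union> B" "E x y" for x y
        using that assms(1)[of x y] by auto
    qed (use assms(3) in auto)
    then show "w \<in> component E A v" by (simp add: component_def)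
  qed
  show "component E A v \<subseteq> component E (A \<union> B) v"
    unfolding component_def by (blast intro: reach_mono)
qed

lemma has_odd_component_Un_disjoint:
  assumes "\<And>a b. a \<in> A \<Longrightarrow> b \<in> B \<Longrightarrow> \<not> E a b \<and> \<not> E b a" "A \<inter> B = {}"
  shows "has_odd_component E (A \<union> B) \<longleftrightarrow> has_odd_component E A \<or> has_odd_component E B"
proof -
  have A: "component E (A \<union> B) v = component E A v" if "v \<in> A" for v
    using assms that by (rule component_Un_disjoint)
  have "component E (B \<union> A) v = component E B v" if "v \<in> B" for v
    by (rule component_Un_disjoint) (use assms that in blast)+
  then have B: "component E (A \<union> B) v = component E B v" if "v \<in> B" for v
    using that by (simp only: Un_commute)
  show ?thesis
    unfolding has_odd_component_iff bex_Un
    by (intro arg_cong2[where f = "(\<or>)"] bex_cong) (simp_all add: A B)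
qed

lemma sum_Pow_Un_disjoint_mult:
  assumes "finite A" "finite B" "A \<inter> B = {}"
  shows "(\<Sum>W \<in> Pow (A \<union> B). g (W \<inter> A) * h (W \<inter> B)) = (\<Sum>X \<in> Pow A. g X) * (\<Sum>Y \<in> Pow B. (h Y :: 'b::comm_semiring_0))"
proof -
  have bij: "bij_betw (\<lambda>(X, Y). X \<union> Y) (Pow A \<times> Pow B) (Pow (A \<union> B))"
  proof (rule bij_betw_byWitness[where f' = "\<lambda>W. (W \<inter> A, W \<inter> B)"])
  qed (use assms(3) in auto)
  have "(\<Sum>W \<in> Pow (A \<union> B). g (W \<inter> A) * h (W \<inter> B)) =
        (\<Sum>(X, Y) \<in> Pow A \<times> Pow B. g ((X \<union> Y) \<inter> A) * h ((X \<union> Y) \<inter> B))"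
    by (subst sum.reindex_bij_betw[OF bij, symmetric]) (simp add: case_prod_beta)
  also have "\<dots> = (\<Sum>(X, Y) \<in> Pow A \<times> Pow B. g X * h Y)"
  proof (intro sum.cong refl, clarify)
    fix X Y assume "X \<subseteq> A" "Y \<subseteq> B"
    then have "(X \<union> Y) \<inter> A = X" "(X \<union> Y) \<inter> B = Y" using assms(3) by auto
    then show "g ((X \<union> Y) \<inter> A) * h ((X \<union> Y) \<inter> B) = g X * h Y" by simp
  qed
  also have "\<dots> = (\<Sum>X \<in> Pow A. g X) * (\<Sum>Y \<in> Pow B. h Y)"
    by (simp add: sum_product sum.cartesian_product)
  finally show ?thesis .
qed

lemma sa_Un_disjoint:
  assumes "finite A" "finite B" "A \<inter> B = {}" "\<And>a b. a \<in> A \<Longrightarrow> b \<in> B \<Longrightarrow> \<not> E a b \<and> \<not> E b a"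
  shows "sa E (A \<union> B) = sa E A * sa E B"
  using assms
proof (induction "card (A \<union> B)" arbitrary: A B rule: less_induct)
  case less
  note odd_iff = has_odd_component_Un_disjoint[of A B E, OF less.prems(4,3)]
  have fin: "finite (A \<union> B)" using less.prems by simp
  consider "A = {} \<or> B = {}" | "has_odd_component E A" | "has_odd_component E B"
    | "A \<noteq> {}" "B \<noteq> {}" "\<not> has_odd_component E A" "\<not> has_odd_component E B"
    by blast
  then show ?case
  proof cases
    case 1
    then show ?thesis by auto
  next
    case 2
    then show ?thesis using odd_iff fin less.prems(1) by (simp add: sa_eq_0_if_has_odd_component)
  next
    case 3
    then show ?thesis using odd_iff fin less.prems(2) by (simp add: sa_eq_0_if_has_odd_component)
  next
    case 4
    have proper: "sa E W = sa E (W \<inter> A) * sa E (W \<inter> B)" if "W \<subset> A \<union> B" for W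
    proof -
      have W: "W \<inter> A \<union> W \<inter> B = W" using that by auto
      have "card W < card (A \<union> B)" using fin that by (rule psubset_card_mono)
      moreover have "W \<inter> A \<inter> (W \<inter> B) = {}" using less.prems(3) by blast
      ultimately have "sa E (W \<inter> A \<union> W \<inter> B) = sa E (W \<inter> A) * sa E (W \<inter> B)"
        using less.hyps[of "W \<inter> A" "W \<inter> B"] less.prems by (simp add: W)
      then show ?thesis by (simp only: W)
    qed
    have "sa E (A \<union> B) + (\<Sum>W \<in> {W. W \<subset> A \<union> B}. sa E W) = 0"
      using sum_sa_Pow_eq_0[OF fin] 4 odd_iff by (simp add: sum_Pow_eq_plus_sum_psubsets[OF fin])
    moreover have "sa E A * sa E B + (\<Sum>W \<in> {W. W \<subset> A \<union> B}. sa E W) = 0"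
    proof -
      have "(\<Sum>W \<in> {W. W \<subset> A \<union> B}. sa E W)
          = (\<Sum>W \<in> {W. W \<subset> A \<union> B}. sa E (W \<inter> A) * sa E (W \<inter> B))"
        by (rule sum.cong[OF refl], rule proper) simp
      moreover have "(A \<union> B) \<inter> A = A" "(A \<union> B) \<inter> B = B" using less.prems(3) by auto
      then have "sa E A * sa E B + (\<Sum>W \<in> {W. W \<subset> A \<union> B}. sa E (W \<inter> A) * sa E (W \<inter> B))
          = (\<Sum>W \<in> Pow (A \<union> B). sa E (W \<inter> A) * sa E (W \<inter> B))"
        by (simp add: sum_Pow_eq_plus_sum_psubsets[OF fin])
      moreover have "\<dots> = 0"
        using sum_Pow_Un_disjoint_mult[of A B "sa E" "sa E"] less.prems(1-3)
          sum_sa_Pow_eq_0[of A E] 4 by simp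
      ultimately show ?thesis by simp
    qed
    ultimately show ?thesis by simp
  qed
qed

section \<open>Paths\<close>

abbreviation sa_path :: "nat \<Rightarrow> int" where
  "sa_path n \<equiv> sa path_edge {..<n}"

abbreviation sa_poly_path :: "nat \<Rightarrow> int poly" where
  "sa_poly_path n \<equiv> sa_poly path_edge {..<n}"

lemma reach_path:
  assumes "i < n" "j < n"
  shows "reach path_edge {..<n} i j"
proof -
  have up: "reach path_edge {..<n} i (i + k)" if "i + k < n" for i k
    using that
  proof (induction k)
    case 0
    then show ?case by (simp add: reach_def)
  next
    case (Suc k)
    then show ?case
      unfolding reach_def by (auto simp: path_edge_def intro: rtranclp.rtrancl_into_rtrancl)
  qed
  have "symp path_edge" by (auto simp: symp_def path_edge_def)
  then show ?thesis
    using up[of i "j - i"] up[of j "i - j"] assms by (cases "i \<le> j") (auto intro: reach_sym)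
qed

lemma has_odd_component_path: "has_odd_component path_edge {..<n} \<longleftrightarrow> odd n"
proof -
  have "component path_edge {..<n} v = {..<n}" if "v < n" for v
    using reach_path that by (auto simp: component_def)
  then show ?thesis by (auto simp: has_odd_component_iff intro: odd_pos)
qed

lemma sa_path_odd: "odd n \<Longrightarrow> sa_path n = 0"
  by (simp add: sa_eq_0_if_has_odd_component has_odd_component_path)

lemma sum_sa_Pow_path_even: "even n \<Longrightarrow> 0 < n \<Longrightarrow> (\<Sum>U \<in> Pow {..<n}. sa path_edge U) = 0"
  using sum_sa_Pow_eq_0[of "{..<n}" path_edge] by (simp add: has_odd_component_path lessThan_empty_iff)

definition gap_union :: "nat \<Rightarrow> nat set \<Rightarrow> nat set" where
  "gap_union j W = {..<j} \<union> (\<lambda>w. w + Suc j) ` W"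

lemma sa_gap_union: "finite W \<Longrightarrow> sa path_edge (gap_union j W) = sa_path j * sa path_edge W"
proof -
  assume "finite W"
  then have "sa path_edge (gap_union j W) = sa_path j * sa path_edge ((\<lambda>w. w + Suc j) ` W)"
    unfolding gap_union_def by (intro sa_Un_disjoint) (auto simp: path_edge_def)
  also have "sa path_edge ((\<lambda>w. w + Suc j) ` W) = sa path_edge W"
    by (rule sa_image) (auto simp: path_edge_def inj_on_def)
  finally show ?thesis .
qed

lemma notin_gap_union: "j \<notin> gap_union j W"
  by (auto simp: gap_union_def)

lemma Least_notin_gap_union: "(LEAST i. i \<notin> gap_union j W) = j"
  by (rule Least_equality) (auto simp: gap_union_def)

lemma gap_union_Least_notin:
  assumes "j \<notin> U" "\<And>i. i < j \<Longrightarrow> i \<in> U"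
  shows "gap_union j {w. w + Suc j \<in> U} = U"
proof -
  have "(\<lambda>w. w + Suc j) ` {w. w + Suc j \<in> U} = {u \<in> U. j < u}"
  proof
    show "{u \<in> U. j < u} \<subseteq> (\<lambda>w. w + Suc j) ` {w. w + Suc j \<in> U}"
    proof clarify
      fix u assume "u \<in> U" "j < u"
      then show "u \<in> (\<lambda>w. w + Suc j) ` {w. w + Suc j \<in> U}"
        by (intro image_eqI[of _ _ "u - Suc j"]) auto
    qed
  qed auto
  then show ?thesis
    unfolding gap_union_def using assms by (auto simp: nat_neq_iff)
qed

lemma gap_union_subset: "W \<subseteq> {..<m} \<Longrightarrow> gap_union j W \<subseteq> {..<m + Suc j}"
  by (auto simp: gap_union_def)

lemma card_diff_gap_union:
  assumes "W \<subseteq> {..<m}"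
  shows "card ({..<m + Suc j} - gap_union j W) = Suc (card ({..<m} - W))"
proof -
  have "finite W" using assms finite_subset by blast
  have "card (gap_union j W) = j + card W"
    unfolding gap_union_def
    by (subst card_Un_disjoint) (auto simp: card_image inj_on_def \<open>finite W\<close>)
  moreover have "card W \<le> m" using assms card_mono[of "{..<m}" W] by simp
  ultimately show ?thesis
    using assms \<open>finite W\<close> gap_union_subset[OF assms, of j]
    by (simp add: card_Diff_subset gap_union_def)
qed

lemma bij_betw_gap_union:
  "bij_betw (\<lambda>(j, W). gap_union j W) (SIGMA j:{..<n}. Pow {..<n - Suc j}) (Pow {..<n} - {{..<n}})"
proof -
  let ?g = "\<lambda>U. (LEAST i. i \<notin> U, {w. w + Suc (LEAST i. i \<notin> U) \<in> U})"
  show ?thesis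
  proof (rule bij_betw_byWitness[where f' = ?g])
    show "\<forall>p \<in> SIGMA j:{..<n}. Pow {..<n - Suc j}. ?g ((\<lambda>(j, W). gap_union j W) p) = p"
      by (clarsimp simp: Least_notin_gap_union) (auto simp: gap_union_def)
    show "\<forall>U \<in> Pow {..<n} - {{..<n}}. (\<lambda>(j, W). gap_union j W) (?g U) = U"
    proof
      fix U assume "U \<in> Pow {..<n} - {{..<n}}"
      then obtain i where "i \<notin> U" by auto
      then have "(LEAST i. i \<notin> U) \<notin> U" by (rule LeastI)
      then show "(\<lambda>(j, W). gap_union j W) (?g U) = U"
        unfolding prod.case by (rule gap_union_Least_notin) (auto dest: not_less_Least)
    qed
    show "(\<lambda>(j, W). gap_union j W) ` (SIGMA j:{..<n}. Pow {..<n - Suc j}) \<subseteq> Pow {..<n} - {{..<n}}"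
    proof clarify
      fix j W assume "j < n" "W \<subseteq> {..<n - Suc j}"
      then have "gap_union j W \<subseteq> {..<n}" using gap_union_subset[of W "n - Suc j" j] by simp
      moreover have "gap_union j W \<noteq> {..<n}" using \<open>j < n\<close> notin_gap_union[of j W] by blast
      ultimately show "gap_union j W \<in> Pow {..<n} - {{..<n}}" by simp
    qed
    show "?g ` (Pow {..<n} - {{..<n}}) \<subseteq> (SIGMA j:{..<n}. Pow {..<n - Suc j})"
    proof (rule image_subsetI)
      fix U assume U: "U \<in> Pow {..<n} - {{..<n}}"
      then obtain i where "i < n" "i \<notin> U" by auto
      then have "(LEAST i. i \<notin> U) < n" by (meson Least_le le_less_trans)
      with U show "?g U \<in> (SIGMA j:{..<n}. Pow {..<n - Suc j})" by auto
    qed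
  qed
qed

lemma sa_poly_path_rec:
  "sa_poly_path n = [:sa_path n:] + (\<Sum>j<n. [:sa_path j:] * [:0, 1:] * sa_poly_path (n - Suc j))"
proof -
  define F where "F U = monom (sa path_edge U) (card ({..<n} - U))" for U
  have "sa_poly_path n = F {..<n} + (\<Sum>U \<in> Pow {..<n} - {{..<n}}. F U)"
    unfolding sa_poly_def F_def by (subst sum.remove[of _ "{..<n}"]) auto
  also have "F {..<n} = [:sa_path n:]"
    by (simp add: F_def monom_0)
  also have "(\<Sum>U \<in> Pow {..<n} - {{..<n}}. F U)
      = (\<Sum>(j, W) \<in> (SIGMA j:{..<n}. Pow {..<n - Suc j}). F (gap_union j W))"
    by (subst sum.reindex_bij_betw[OF bij_betw_gap_union, symmetric]) (simp add: case_prod_beta)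
  also have "\<dots> = (\<Sum>(j, W) \<in> (SIGMA j:{..<n}. Pow {..<n - Suc j}).
      [:sa_path j:] * [:0, 1:] * monom (sa path_edge W) (card ({..<n - Suc j} - W)))"
  proof (intro sum.cong refl, clarify)
    fix j W assume "j < n" "W \<subseteq> {..<n - Suc j}"
    moreover have "finite W" using calculation(2) finite_subset by blast
    ultimately show "F (gap_union j W) = [:sa_path j:] * [:0, 1:] * monom (sa path_edge W) (card ({..<n - Suc j} - W))"
      using card_diff_gap_union[of W "n - Suc j" j]
      by (simp add: F_def sa_gap_union monom_Suc smult_monom)
  qed
  also have "\<dots> = (\<Sum>j<n. [:sa_path j:] * [:0, 1:] * sa_poly_path (n - Suc j))"
    by (simp add: sum.Sigma[symmetric] sa_poly_def sum_distrib_left)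
  finally show ?thesis .
qed

lemma poly_sa_poly_one: "poly (sa_poly E V) 1 = (\<Sum>U \<in> Pow V. sa E U)"
  by (simp add: sa_poly_def poly_sum poly_monom)

section \<open>Generating functions\<close>

text \<open>Characteristic 0 is what \<open>radical_unique\<close> needs to identify \<open>sqrt_1_4x2\<close>.\<close>

instance fract :: ("{idom, ring_char_0}") field_char_0
  by standard (rule injI, simp add: of_nat_fract eq_fract)

lemma Fract_add_1: "Fract (a + b) 1 = Fract a 1 + Fract (b :: 'a::idom) 1"
  by simp

lemma Fract_sum_1: "Fract (\<Sum>x\<in>S. f x) 1 = (\<Sum>x\<in>S. Fract (f x) (1 :: 'a::idom))"
proof (induction S rule: infinite_finite_induct)
  case (insert x F)
  then show ?case by (simp add: Fract_add_1 del: add_fract)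
qed (simp_all add: Zero_fract_def)

lemma Fract_of_int_1: "Fract (of_int k) 1 = (of_int k :: 'a::idom fract)"
  by (cases k rule: int_cases) (simp_all add: Fract_of_nat_eq[symmetric] One_fract_def)

lemma Fract_const_poly_1: "Fract [:c:] 1 = of_int c"
  using Fract_of_int_1[of c, where 'a = "int poly"] by (simp add: of_int_poly)

lemma fps_eq_plus_fps_X_mult:
  fixes f g h :: "'a::comm_ring_1 fps"
  assumes "f $ 0 = g $ 0" "\<And>n. f $ Suc n = g $ Suc n + h $ n"
  shows "f = g + fps_X * h"
proof (rule fps_ext)
  fix n show "f $ n = (g + fps_X * h) $ n"
    using assms by (cases n) simp_all
qed

definition sa_path_fps :: "int poly fract fps" where
  "sa_path_fps = Abs_fps (\<lambda>n. of_int (sa_path n))"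

definition sa_poly_path_fps :: "int poly fract fps" where
  "sa_poly_path_fps = Abs_fps (\<lambda>n. Fract (sa_poly_path n) 1)"

definition sum_sa_path_fps :: "int poly fract fps" where
  "sum_sa_path_fps = Abs_fps (\<lambda>n. of_int (\<Sum>U \<in> Pow {..<n}. sa path_edge U))"

lemma sa_poly_path_fps_eq:
  "sa_poly_path_fps = sa_path_fps + fps_X * (T * (sa_path_fps * sa_poly_path_fps))"
proof (rule fps_eq_plus_fps_X_mult)
  show "sa_poly_path_fps $ 0 = sa_path_fps $ 0"
    by (simp add: sa_poly_path_fps_def sa_path_fps_def sa_poly_def One_fract_def)
  fix m
  define t where "t = Fract [:0, 1:] (1 :: int poly)"
  have "Fract (sa_poly_path (Suc m)) 1 = of_int (sa_path (Suc m))
      + (\<Sum>j<Suc m. of_int (sa_path j) * t * Fract (sa_poly_path (m - j)) 1)"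
    unfolding t_def
    by (subst sa_poly_path_rec) (simp add: Fract_sum_1[symmetric] Fract_const_poly_1[symmetric])
  also have "(\<Sum>j<Suc m. of_int (sa_path j) * t * Fract (sa_poly_path (m - j)) 1)
      = t * (sa_path_fps * sa_poly_path_fps) $ m"
    by (simp add: sa_path_fps_def sa_poly_path_fps_def fps_mult_nth
        sum_distrib_left lessThan_Suc_atMost atLeast0AtMost mult_ac)
  finally show "sa_poly_path_fps $ Suc m = sa_path_fps $ Suc m + (T * (sa_path_fps * sa_poly_path_fps)) $ m"
    by (simp add: T_def t_def[symmetric] sa_poly_path_fps_def sa_path_fps_def)
qed

lemma sum_sa_path_fps_eq: "sum_sa_path_fps = sa_path_fps + fps_X * (sa_path_fps * sum_sa_path_fps)"
proof (rule fps_eq_plus_fps_X_mult)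
  show "sum_sa_path_fps $ 0 = sa_path_fps $ 0"
    by (simp add: sum_sa_path_fps_def sa_path_fps_def)
  fix m
  define b where "b n = (\<Sum>U \<in> Pow {..<n}. sa path_edge U)" for n
  have "poly (sa_poly_path (Suc m)) 1
      = sa_path (Suc m) + (\<Sum>j<Suc m. sa_path j * poly (sa_poly_path (m - j)) 1)"
    by (subst sa_poly_path_rec) (simp add: poly_sum)
  then have "b (Suc m) = sa_path (Suc m) + (\<Sum>i=0..m. sa_path i * b (m - i))"
    by (simp add: b_def poly_sa_poly_one lessThan_Suc_atMost atLeast0AtMost)
  then have "of_int (b (Suc m)) = of_int (sa_path (Suc m))
      + (\<Sum>i=0..m. of_int (sa_path i) * (of_int (b (m - i)) :: int poly fract))"
    by simp
  then show "sum_sa_path_fps $ Suc m = sa_path_fps $ Suc m + (sa_path_fps * sum_sa_path_fps) $ m"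
    by (simp add: sum_sa_path_fps_def sa_path_fps_def fps_mult_nth b_def)
qed

lemma sa_path_fps_reflect: "sa_path_fps oo - fps_X = sa_path_fps"
proof (rule fps_ext)
  fix n show "(sa_path_fps oo - fps_X) $ n = sa_path_fps $ n"
    by (cases "even n") (simp_all add: fps_compose_uminus' sa_path_fps_def sa_path_odd)
qed

lemma sum_sa_path_fps_reflect: "sum_sa_path_fps oo - fps_X = 2 - sum_sa_path_fps"
proof (rule fps_ext)
  fix n :: nat
  consider "n = 0" | "odd n" | "even n" "0 < n" by (cases "even n"; cases "n = 0") auto
  then show "(sum_sa_path_fps oo - fps_X) $ n = (2 - sum_sa_path_fps) $ n"
    by cases (simp_all add: fps_compose_uminus' sum_sa_path_fps_def fps_numeral_nth
        sum_sa_Pow_path_even odd_pos del: of_int_sum)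
qed

lemma sum_sa_path_fps_closed: "sum_sa_path_fps = 1 + fps_X * sa_path_fps"
proof -
  let ?B = sum_sa_path_fps and ?C = sa_path_fps
  have "?B oo - fps_X = (?C oo - fps_X) + (fps_X oo - fps_X) * ((?C oo - fps_X) * (?B oo - fps_X))"
    by (subst sum_sa_path_fps_eq) (simp add: fps_compose_add_distrib fps_compose_mult_distrib)
  then have "2 - ?B = ?C - fps_X * (?C * (2 - ?B))"
    by (simp add: sa_path_fps_reflect sum_sa_path_fps_reflect)
  then have "2 * (?B - 1 - fps_X * ?C) = 0"
    using sum_sa_path_fps_eq by (simp add: algebra_simps)
  then have "?B - 1 - fps_X * ?C = 0"
    by (subst (asm) mult_eq_0_iff) simp
  then show ?thesis by (simp add: algebra_simps)
qed

lemma sa_path_fps_quadratic: "sa_path_fps + (fps_X * sa_path_fps)\<^sup>2 = 1"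
  using sum_sa_path_fps_eq unfolding sum_sa_path_fps_closed
  by (simp add: algebra_simps power2_eq_square)

lemma sqrt_1_4x2_eq: "sqrt_1_4x2 = 1 + 2 * fps_X\<^sup>2 * sa_path_fps"
proof -
  let ?S = "1 + 2 * fps_X\<^sup>2 * sa_path_fps"
  have "?S\<^sup>2 = 1 + 4 * fps_X\<^sup>2 * (sa_path_fps + (fps_X * sa_path_fps)\<^sup>2)"
    by (simp add: algebra_simps power2_eq_square)
  then have "?S ^ Suc 1 = 1 + 4 * fps_X\<^sup>2"
    by (simp only: sa_path_fps_quadratic mult_1_right Suc_1)
  then have "?S = fps_radical (\<lambda>_ _. 1) (Suc 1) (1 + 4 * fps_X\<^sup>2)"
    using radical_unique[of "\<lambda>_ _. 1" 1 "1 + 4 * fps_X\<^sup>2" ?S] by simp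
  then show ?thesis
    by (simp add: sqrt_1_4x2_def numeral_2_eq_2)
qed

lemma sa_poly_path_fps_closed:
  "sa_poly_path_fps * (T - (T\<^sup>2 - 1) * fps_X) = T + fps_X * sa_path_fps"
proof -
  let ?A = sa_poly_path_fps and ?W = "fps_X * sa_path_fps"
  \<comment> \<open>the right-hand side combines the equations for \<open>?A\<close> and \<open>sa_path_fps\<close>; \<open>1 - T * ?W\<close> is a unit\<close>
  have "(1 - T * ?W) * (?A * (T - (T\<^sup>2 - 1) * fps_X) - (T + ?W)) =
      T * (sa_path_fps + ?W\<^sup>2 - 1)
      + (?A - (sa_path_fps + fps_X * (T * (sa_path_fps * ?A)))) * (T - (T\<^sup>2 - 1) * fps_X)"
    by (simp add: algebra_simps power2_eq_square)
  also have "\<dots> = 0"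
    using sa_poly_path_fps_eq sa_path_fps_quadratic by simp
  finally have "(1 - T * ?W) * (?A * (T - (T\<^sup>2 - 1) * fps_X) - (T + ?W)) = 0" .
  moreover have "1 - T * ?W \<noteq> 0"
  proof
    assume "1 - T * ?W = 0"
    then have "(1 - T * ?W) $ 0 = 0" by simp
    then show False by simp
  qed
  ultimately show ?thesis by simp
qed

lemma T_nonzero: "T \<noteq> 0"
  by (simp add: T_def eq_fract Zero_fract_def)

theorem mainTheorem1:
  shows "Abs_fps (\<lambda>n. Fract (sa_poly path_edge {..<n}) 1) =
    (-1 + 2 * T * fps_X + sqrt_1_4x2) / (2 * T * fps_X - 2 * (T ^ 2 - 1) * fps_X ^ 2)"
proof -
  let ?D = "2 * T * fps_X - 2 * (T ^ 2 - 1) * fps_X ^ 2"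
  have D: "?D = 2 * fps_X * (T - (T\<^sup>2 - 1) * fps_X)"
    by (simp add: algebra_simps power2_eq_square)
  have "?D $ 1 \<noteq> 0"
    unfolding D using T_nonzero by (simp add: T_def fps_numeral_nth)
  then have "?D \<noteq> 0" by (metis fps_zero_nth)
  have "sa_poly_path_fps * ?D = 2 * fps_X * (sa_poly_path_fps * (T - (T\<^sup>2 - 1) * fps_X))"
    unfolding D by (simp only: mult_ac)
  also have "\<dots> = -1 + 2 * T * fps_X + sqrt_1_4x2"
    unfolding sa_poly_path_fps_closed sqrt_1_4x2_eq by (simp add: algebra_simps power2_eq_square)
  finally show ?thesis
    using \<open>?D \<noteq> 0\<close> unfolding sa_poly_path_fps_def[symmetric] by (metis nonzero_mult_div_cancel_right)
qed

end
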